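(* Let $\Delta\in\mathbb F^{m\times m}$ be a connection matrix with column/row partition $J_0,\dots,J_b$, and let $\Delta^0,\dots,\Delta^m$, $T^1,\dots,T^{m-1}$ be produced by the Incremental Sweeping Algorithm applied to $\Delta$. Then for $2\le r\le m$ and $k=1,\dots,b$, $$\Delta^r_{J_{k-1}J_k}=(T^{r-1}_{J_{k-1}J_{k-1}})^{-1}\,\Delta^{r-1}_{J_{k-1}J_k}\,T^{r-1}_{J_kJ_k},$$ and all entries of $\Delta^r$ outside $\bigcup_k J_{k-1}\times J_k$ are zero. Consequently, in passing from $\Delta^{r-1}$ to $\Delta^r$, the only columns modified (by adding multiples of other columns) are columns $j$ such that $(j-r+1,j)$ is a change-of-basis pivot of iteration $r-1$, and the only rows modified (by adding multiples of other rows) are rows $p$ such that $(j-r+1,p)$ is the primary pivot used for some change-of-basis pivot $(j-r+1,j)$ of iteration $r-1$.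
   Context: Throughout, $\mathbb F$ is a field and $m\ge1$. $A_{IJ}$ is the submatrix of $A$ with rows in $I$, columns in $J$. $U^{pq}$ is the $m\times m$ matrix whose only nonzero entry is a $1$ in position $(p,q)$. Superscripts on matrices are indices, not powers. A connection matrix (over $\mathbb F$) is a matrix $\Delta\in\mathbb F^{m\times m}$ together with a partition $\{1,\dots,m\}=J_0\sqcup\cdots\sqcup J_b$ (the column/row partition; the $J_k$ need not consist of consecutive integers) such that $\Delta$ is upper triangular, $\Delta\Delta=0$, and $\Delta_{ij}=0$ unless $i<j$ and $(i,j)\in\bigcup_{k=1}^bJ_{k-1}\times J_k$. For $1\le r\le m-1$ the $r$-th diagonal is $\{(j-r,j):r<j\le m\}$. Incremental Sweeping Algorithm (ISA) applied to a connection matrix $\Delta$: set $\Delta^0=\Delta^1=\Delta$. For $r=1,\dots,m-1$ in turn: (Markup) for every position $(j-r,j)$ on the $r$-th diagonal with $\Delta^r_{j-r,j}\ne0$ such that no position in column $j$ was marked as a primary pivot at an earlier iteration: if some position $(j-r,p)$ of row $j-r$ was marked as a primary pivot at an earlier iteration, mark $(j-r,j)$ as a change-of-basis pivot of iteration $r$; otherwise mark $(j-r,j)$ permanently as a primary pivot. (Update) Let $T^r=I-\sum \frac{\Delta^r_{j-r,j}}{\Delta^r_{j-r,p}}U^{pj}$, the sum running over all change-of-basis pivots $(j-r,j)$ of iteration $r$, where $(j-r,p)$ is the primary pivot position in row $j-r$ (the primary pivot used for $(j-r,j)$); set $\Delta^{r+1}=(T^r)^{-1}\Delta^rT^r$.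 *)

theory Defs
  imports "Jordan_Normal_Form.DL_Submatrix"
begin

(* Conventions: matrices are Jordan_Normal_Form m x m matrices, indices 0-based
   (paper's index i corresponds to i-1 here).  Positions are pairs (row, column). *)

definition is_partition :: "nat \<Rightarrow> nat \<Rightarrow> (nat \<Rightarrow> nat set) \<Rightarrow> bool" where
  "is_partition m b J \<longleftrightarrow>
     (\<Union>k\<le>b. J k) = {..<m} \<and> (\<forall>k\<le>b. J k \<noteq> {}) \<and>
     (\<forall>k\<le>b. \<forall>l\<le>b. k \<noteq> l \<longrightarrow> J k \<inter> J l = {})"

definition block_support :: "nat \<Rightarrow> (nat \<Rightarrow> nat set) \<Rightarrow> (nat \<times> nat) set" where
  "block_support b J = (\<Union>k\<in>{1..b}. J (k - 1) \<times> J k)"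

definition connection_matrix :: "nat \<Rightarrow> nat \<Rightarrow> (nat \<Rightarrow> nat set) \<Rightarrow> 'a::field mat \<Rightarrow> bool" where
  "connection_matrix m b J D \<longleftrightarrow>
     D \<in> carrier_mat m m \<and> is_partition m b J \<and> upper_triangular D \<and> D * D = 0\<^sub>m m m \<and>
     (\<forall>i<m. \<forall>j<m. D $$ (i, j) \<noteq> 0 \<longrightarrow> i < j \<and> (i, j) \<in> block_support b J)"

definition unit_mat :: "nat \<Rightarrow> nat \<Rightarrow> nat \<Rightarrow> 'a::{zero,one} mat" where
  "unit_mat m p q = mat m m (\<lambda>(i, j). if i = p \<and> j = q then 1 else 0)"

definition inv_mat :: "'a::field mat \<Rightarrow> 'a mat" where
  "inv_mat A = (SOME B. B \<in> carrier_mat (dim_row A) (dim_row A) \<and>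
                        A * B = 1\<^sub>m (dim_row A) \<and> B * A = 1\<^sub>m (dim_row A))"

(* ISA, iteration r, given the current matrix D = \<Delta>^r and the set P of positions marked
   as primary pivots at earlier iterations *)

definition isa_cand :: "nat \<Rightarrow> nat \<Rightarrow> 'a::field mat \<Rightarrow> (nat \<times> nat) set \<Rightarrow> (nat \<times> nat) set" where
  "isa_cand m r D P = {(j - r, j) | j. r \<le> j \<and> j < m \<and> D $$ (j - r, j) \<noteq> 0 \<and>
                                     (\<forall>i. (i, j) \<notin> P)}"

definition isa_cob :: "nat \<Rightarrow> nat \<Rightarrow> 'a::field mat \<Rightarrow> (nat \<times> nat) set \<Rightarrow> (nat \<times> nat) set" where
  "isa_cob m r D P = {x \<in> isa_cand m r D P. \<exists>p. (fst x, p) \<in> P}"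

definition isa_newprim :: "nat \<Rightarrow> nat \<Rightarrow> 'a::field mat \<Rightarrow> (nat \<times> nat) set \<Rightarrow> (nat \<times> nat) set" where
  "isa_newprim m r D P = {x \<in> isa_cand m r D P. \<forall>p. (fst x, p) \<notin> P}"

definition prim_col :: "(nat \<times> nat) set \<Rightarrow> nat \<Rightarrow> nat" where
  "prim_col P i = (SOME p. (i, p) \<in> P)"

definition isa_T :: "nat \<Rightarrow> nat \<Rightarrow> 'a::field mat \<Rightarrow> (nat \<times> nat) set \<Rightarrow> 'a mat" where
  "isa_T m r D P = mat m m (\<lambda>(a, c). (1\<^sub>m m :: 'a mat) $$ (a, c) -
      (\<Sum>(i, j)\<in>isa_cob m r D P. (D $$ (i, j) / D $$ (i, prim_col P i)) *
                                      (unit_mat m (prim_col P i) j :: 'a mat) $$ (a, c)))"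

definition isa_step :: "nat \<Rightarrow> nat \<Rightarrow> 'a::field mat \<times> (nat \<times> nat) set \<Rightarrow> 'a mat \<times> (nat \<times> nat) set" where
  "isa_step m r S = (let D = fst S; P = snd S; T = isa_T m r D P in
     (inv_mat T * D * T, P \<union> isa_newprim m r D P))"

(* isa_state m \<Delta> r = (\<Delta>^r, primary pivots marked at iterations < r); \<Delta>^0 = \<Delta>^1 = \<Delta> *)
fun isa_state :: "nat \<Rightarrow> 'a::field mat \<Rightarrow> nat \<Rightarrow> 'a mat \<times> (nat \<times> nat) set" where
  "isa_state m D 0 = (D, {})"
| "isa_state m D (Suc r) = (if r = 0 then (D, {}) else isa_step m r (isa_state m D r))"

definition isa_Delta :: "nat \<Rightarrow> 'a::field mat \<Rightarrow> nat \<Rightarrow> 'a mat" where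
  "isa_Delta m D r = fst (isa_state m D r)"

definition isa_prim_before :: "nat \<Rightarrow> 'a::field mat \<Rightarrow> nat \<Rightarrow> (nat \<times> nat) set" where
  "isa_prim_before m D r = snd (isa_state m D r)"

definition isa_Tmat :: "nat \<Rightarrow> 'a::field mat \<Rightarrow> nat \<Rightarrow> 'a mat" where
  "isa_Tmat m D r = isa_T m r (isa_Delta m D r) (isa_prim_before m D r)"

definition isa_cob_pivots :: "nat \<Rightarrow> 'a::field mat \<Rightarrow> nat \<Rightarrow> (nat \<times> nat) set" where
  "isa_cob_pivots m D r = isa_cob m r (isa_Delta m D r) (isa_prim_before m D r)"

definition isa_used_prim_col :: "nat \<Rightarrow> 'a::field mat \<Rightarrow> nat \<Rightarrow> nat \<Rightarrow> nat" where
  "isa_used_prim_col m D r i = prim_col (isa_prim_before m D r) i"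

end

theory Submission
  imports Defs "Jordan_Normal_Form.Determinant"
begin

text \<open>
  Write \<open>s = r - 1\<close> and \<open>T = T\<^sup>s\<close>. Suppose every primary pivot \<open>(i, p)\<close> marked before
  iteration \<open>s\<close> lies in the block support with \<open>i < p < i + s\<close>. A change-of-basis pivot
  \<open>(j - s, j)\<close> and its primary pivot \<open>(j - s, p)\<close> share a row, so \<open>p < j\<close> and \<open>p, j\<close> lie in
  the same block. Hence \<open>T\<close> is unit upper triangular and block diagonal; so is \<open>T\<^sup>-\<^sup>1\<close> block
  diagonal, because it commutes with every block projector that \<open>T\<close> commutes with.
  Conjugation by such a matrix keeps the support inside the blocks \<open>J\<^sub>k\<^sub>-\<^sub>1 \<times> J\<^sub>k\<close> and acts on
  each of them separately, which gives the block formula and, by induction on \<open>s\<close>, the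
  hypothesis on the pivots. Finally \<open>T\<close> differs from the identity only in the columns of
  change-of-basis pivots and the rows of the primary pivots they use, and a unit row of \<open>T\<close>
  is also a unit row of \<open>T\<^sup>-\<^sup>1\<close>.
\<close>

section \<open>Products, inverses and submatrices\<close>

lemma index_mult_mat_sum:
  assumes "A \<in> carrier_mat n k" "B \<in> carrier_mat k l" "i < n" "j < l"
  shows "(A * B) $$ (i, j) = (\<Sum>a<k. A $$ (i, a) * B $$ (a, j))"
  using assms by (simp add: scalar_prod_def lessThan_atLeast0)

lemma index_mult_mat_nonzero:
  fixes A B :: "'a::semiring_0 mat"
  assumes "A \<in> carrier_mat n k" "B \<in> carrier_mat k l" "i < n" "j < l" "(A * B) $$ (i, j) \<noteq> 0"
  obtains a where "a < k" "A $$ (i, a) \<noteq> 0" "B $$ (a, j) \<noteq> 0"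
proof -
  obtain a where "a \<in> {..<k}" "A $$ (i, a) * B $$ (a, j) \<noteq> 0"
    using assms(5) sum.not_neutral_contains_not_neutral
    unfolding index_mult_mat_sum[OF assms(1-4)] by blast
  then show thesis using that mult_not_zero by blast
qed

lemma index_mult_mat_unit_row:
  fixes A B :: "'a::semiring_1 mat"
  assumes "A \<in> carrier_mat n k" "B \<in> carrier_mat k l" "i < n" "i < k" "j < l"
    and "\<And>a. a < k \<Longrightarrow> A $$ (i, a) = (if i = a then 1 else 0)"
  shows "(A * B) $$ (i, j) = B $$ (i, j)"
proof -
  have "(A * B) $$ (i, j) = (\<Sum>a<k. if i = a then B $$ (i, j) else 0)"
    unfolding index_mult_mat_sum[OF assms(1-3,5)] by (rule sum.cong) (auto simp: assms(6))
  then show ?thesis using assms(4) by simp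
qed

lemma index_mult_mat_unit_col:
  fixes A B :: "'a::semiring_1 mat"
  assumes "A \<in> carrier_mat n k" "B \<in> carrier_mat k l" "i < n" "j < l" "j < k"
    and "\<And>a. a < k \<Longrightarrow> B $$ (a, j) = (if a = j then 1 else 0)"
  shows "(A * B) $$ (i, j) = A $$ (i, j)"
proof -
  have "(A * B) $$ (i, j) = (\<Sum>a<k. if a = j then A $$ (i, j) else 0)"
    unfolding index_mult_mat_sum[OF assms(1-4)] by (rule sum.cong) (auto simp: assms(6))
  then show ?thesis using assms(5) by simp
qed

lemma inv_mat_eqI:
  fixes A B :: "'a::field mat"
  assumes A: "A \<in> carrier_mat n n" and B: "B \<in> carrier_mat n n"
    and AB: "A * B = 1\<^sub>m n" and BA: "B * A = 1\<^sub>m n"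
  shows "inv_mat A = B"
proof -
  have "\<exists>B. B \<in> carrier_mat n n \<and> A * B = 1\<^sub>m n \<and> B * A = 1\<^sub>m n"
    using B AB BA by blast
  then have C: "inv_mat A \<in> carrier_mat n n" and CA: "inv_mat A * A = 1\<^sub>m n"
    using someI_ex[where P = "\<lambda>C. C \<in> carrier_mat n n \<and> A * C = 1\<^sub>m n \<and> C * A = 1\<^sub>m n"] A
    unfolding inv_mat_def by auto
  have "inv_mat A = inv_mat A * (A * B)" using C by (simp add: AB)
  also have "\<dots> = (inv_mat A * A) * B" using assoc_mult_mat[OF C A B] by simp
  also have "\<dots> = B" using B by (simp add: CA)
  finally show ?thesis .
qed

lemma inv_mat_nonzero_det:
  fixes A :: "'a::field mat"
  assumes A: "A \<in> carrier_mat n n" and "det A \<noteq> 0"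
  shows "inv_mat A \<in> carrier_mat n n" "A * inv_mat A = 1\<^sub>m n" "inv_mat A * A = 1\<^sub>m n"
proof -
  obtain B where "B \<in> carrier_mat n n" "B * A = 1\<^sub>m n" "A * B = 1\<^sub>m n"
    using det_non_zero_imp_unit[OF assms] unfolding Units_def ring_mat_def by auto
  with inv_mat_eqI[OF A] show "inv_mat A \<in> carrier_mat n n" "A * inv_mat A = 1\<^sub>m n" "inv_mat A * A = 1\<^sub>m n"
    by auto
qed

lemma inv_mat_unit_row:
  fixes A :: "'a::field mat"
  assumes A: "A \<in> carrier_mat n n" and "det A \<noteq> 0" and "p < n" "c < n"
    and "\<And>a. a < n \<Longrightarrow> A $$ (p, a) = (if p = a then 1 else 0)"
  shows "inv_mat A $$ (p, c) = (if p = c then 1 else 0)"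
proof -
  note inv = inv_mat_nonzero_det[OF assms(1,2)]
  have "inv_mat A $$ (p, c) = (A * inv_mat A) $$ (p, c)"
    using index_mult_mat_unit_row[OF A inv(1) assms(3,3,4,5)] by simp
  then show ?thesis using assms(3,4) by (simp add: inv(2))
qed

lemma index_conj_unchanged:
  fixes T D :: "'a::field mat"
  assumes T: "T \<in> carrier_mat n n" and D: "D \<in> carrier_mat n n" and det: "det T \<noteq> 0"
    and i: "i < n" and j: "j < n"
    and row: "\<And>a. a < n \<Longrightarrow> T $$ (i, a) = (if i = a then 1 else 0)"
    and col: "\<And>a. a < n \<Longrightarrow> T $$ (a, j) = (if a = j then 1 else 0)"
  shows "(inv_mat T * D * T) $$ (i, j) = D $$ (i, j)"
proof -
  note inv = inv_mat_nonzero_det[OF T det]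
  have "(inv_mat T * D * T) $$ (i, j) = (inv_mat T * D) $$ (i, j)"
    using index_mult_mat_unit_col[OF mult_carrier_mat[OF inv(1) D] T i j j col] .
  also have "\<dots> = D $$ (i, j)"
    using index_mult_mat_unit_row[OF inv(1) D i i j] inv_mat_unit_row[OF T det i _ row] by blast
  finally show ?thesis .
qed

lemma bij_betw_pick:
  assumes "finite K"
  shows "bij_betw (pick K) {..<card K} K"
proof -
  have inj: "inj_on (pick K) {..<card K}"
    by (rule inj_onI) (metis lessThan_iff nat_neq_iff pick_mono_le)
  have "pick K ` {..<card K} \<subseteq> K" using pick_in_set_le by auto
  moreover have "card (pick K ` {..<card K}) = card K" using card_image[OF inj] by simp
  ultimately have "pick K ` {..<card K} = K" using card_subset_eq[OF assms] by blast
  with inj show ?thesis unfolding bij_betw_def by simp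
qed

lemma Collect_less_mem_eq: "I \<subseteq> {..<n} \<Longrightarrow> {i. i < n \<and> i \<in> I} = I"
  by auto

lemma carrier_submatrix:
  assumes "A \<in> carrier_mat n l" "I \<subseteq> {..<n}" "K \<subseteq> {..<l}"
  shows "submatrix A I K \<in> carrier_mat (card I) (card K)"
  using assms Collect_less_mem_eq[OF assms(2)] Collect_less_mem_eq[OF assms(3)]
  unfolding carrier_mat_def by (simp add: dim_submatrix)

lemma index_submatrix:
  assumes "A \<in> carrier_mat n l" "I \<subseteq> {..<n}" "K \<subseteq> {..<l}" "x < card I" "y < card K"
  shows "submatrix A I K $$ (x, y) = A $$ (pick I x, pick K y)"
  using assms Collect_less_mem_eq[OF assms(2)] Collect_less_mem_eq[OF assms(3)]
  unfolding carrier_mat_def by (simp add: submatrix_index)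

lemma submatrix_mult:
  assumes A: "A \<in> carrier_mat n k" and B: "B \<in> carrier_mat k l"
    and I: "I \<subseteq> {..<n}" and K: "K \<subseteq> {..<k}" and L: "L \<subseteq> {..<l}"
    and zero: "\<And>i a. i \<in> I \<Longrightarrow> a < k \<Longrightarrow> a \<notin> K \<Longrightarrow> A $$ (i, a) = 0"
  shows "submatrix (A * B) I L = submatrix A I K * submatrix B K L"
proof -
  have AI: "submatrix A I K \<in> carrier_mat (card I) (card K)" using carrier_submatrix[OF A I K] .
  have BK: "submatrix B K L \<in> carrier_mat (card K) (card L)" using carrier_submatrix[OF B K L] .
  have AB: "A * B \<in> carrier_mat n l" using A B by simp
  show ?thesis
  proof (rule eq_matI)
    fix x y assume "x < dim_row (submatrix A I K * submatrix B K L)"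
      "y < dim_col (submatrix A I K * submatrix B K L)"
    then have x: "x < card I" and y: "y < card L" using AI BK by auto
    have i: "pick I x \<in> I" and j: "pick L y \<in> L" using pick_in_set_le x y by auto
    let ?f = "\<lambda>a. A $$ (pick I x, a) * B $$ (a, pick L y)"
    have "submatrix (A * B) I L $$ (x, y) = (\<Sum>a<k. ?f a)"
      using index_submatrix[OF AB I L x y] index_mult_mat_sum[OF A B] i j I L by auto
    also have "\<dots> = (\<Sum>a\<in>K. ?f a)"
      using zero[OF i] K by (intro sum.mono_neutral_right) auto
    also have "\<dots> = (\<Sum>z<card K. ?f (pick K z))"
      using sum.reindex_bij_betw[OF bij_betw_pick[OF finite_subset[OF K finite_lessThan]], of ?f]
      by simp
    also have "\<dots> = (\<Sum>z<card K. submatrix A I K $$ (x, z) * submatrix B K L $$ (z, y))"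
      using index_submatrix[OF A I K x] index_submatrix[OF B K L _ y] by (intro sum.cong) auto
    also have "\<dots> = (submatrix A I K * submatrix B K L) $$ (x, y)"
      using index_mult_mat_sum[OF AI BK x y] by simp
    finally show "submatrix (A * B) I L $$ (x, y) = (submatrix A I K * submatrix B K L) $$ (x, y)" .
  qed (use AI BK carrier_submatrix[OF AB I L] in auto)
qed

lemma submatrix_one_mat:
  assumes "I \<subseteq> {..<n}"
  shows "submatrix (1\<^sub>m n) I I = 1\<^sub>m (card I)"
proof (rule eq_matI)
  fix x y assume "x < dim_row (1\<^sub>m (card I))" "y < dim_col (1\<^sub>m (card I))"
  then have x: "x < card I" and y: "y < card I" by auto
  have "pick I x = pick I y \<longleftrightarrow> x = y"
    using pick_mono_le[OF x, of y] pick_mono_le[OF y, of x] by (metis nat_neq_iff)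
  moreover have "pick I x < n" "pick I y < n" using pick_in_set_le x y assms by auto
  ultimately have "1\<^sub>m n $$ (pick I x, pick I y) = 1\<^sub>m (card I) $$ (x, y)"
    using x y by simp
  then show "submatrix (1\<^sub>m n) I I $$ (x, y) = 1\<^sub>m (card I) $$ (x, y)"
    by (simp only: index_submatrix[OF one_carrier_mat assms assms x y])
qed (use carrier_submatrix[OF one_carrier_mat assms assms] in auto)

section \<open>Block-diagonal matrices\<close>

definition diag_proj :: "nat \<Rightarrow> nat set \<Rightarrow> 'a::{zero,one} mat" where
  "diag_proj n S = mat n n (\<lambda>(i, j). if i = j \<and> i \<in> S then 1 else 0)"

lemma diag_proj_carrier [simp]: "diag_proj n S \<in> carrier_mat n n"
  and dim_diag_proj [simp]: "dim_row (diag_proj n S) = n" "dim_col (diag_proj n S) = n"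
  unfolding diag_proj_def by simp_all

lemma index_diag_proj_mult:
  fixes A :: "'a::semiring_1 mat"
  assumes "A \<in> carrier_mat n n" "i < n" "j < n"
  shows "(diag_proj n S * A) $$ (i, j) = (if i \<in> S then A $$ (i, j) else 0)"
proof -
  have "(diag_proj n S * A) $$ (i, j) = (\<Sum>a<n. if a = i then (if i \<in> S then A $$ (i, j) else 0) else 0)"
    unfolding index_mult_mat_sum[OF diag_proj_carrier assms] using assms(2)
    by (intro sum.cong) (auto simp: diag_proj_def)
  then show ?thesis using assms(2) by simp
qed

lemma index_mult_diag_proj:
  fixes A :: "'a::semiring_1 mat"
  assumes "A \<in> carrier_mat n n" "i < n" "j < n"
  shows "(A * diag_proj n S) $$ (i, j) = (if j \<in> S then A $$ (i, j) else 0)"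
proof -
  have "(A * diag_proj n S) $$ (i, j) = (\<Sum>a<n. if a = j then (if j \<in> S then A $$ (i, j) else 0) else 0)"
    unfolding index_mult_mat_sum[OF assms(1) diag_proj_carrier assms(2,3)] using assms(3)
    by (intro sum.cong) (auto simp: diag_proj_def)
  then show ?thesis using assms(3) by simp
qed

lemma diag_proj_commute_iff:
  fixes A :: "'a::semiring_1 mat"
  assumes A: "A \<in> carrier_mat n n"
  shows "diag_proj n S * A = A * diag_proj n S \<longleftrightarrow>
    (\<forall>i<n. \<forall>j<n. A $$ (i, j) \<noteq> 0 \<longrightarrow> (i \<in> S \<longleftrightarrow> j \<in> S))"
proof
  assume comm: "diag_proj n S * A = A * diag_proj n S"
  show "\<forall>i<n. \<forall>j<n. A $$ (i, j) \<noteq> 0 \<longrightarrow> (i \<in> S \<longleftrightarrow> j \<in> S)"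
  proof (intro allI impI)
    fix i j assume ij: "i < n" "j < n" and "A $$ (i, j) \<noteq> 0"
    moreover have "(diag_proj n S * A) $$ (i, j) = (A * diag_proj n S) $$ (i, j)" using comm by simp
    ultimately show "i \<in> S \<longleftrightarrow> j \<in> S"
      unfolding index_diag_proj_mult[OF A ij] index_mult_diag_proj[OF A ij] by (auto split: if_splits)
  qed
next
  assume "\<forall>i<n. \<forall>j<n. A $$ (i, j) \<noteq> 0 \<longrightarrow> (i \<in> S \<longleftrightarrow> j \<in> S)"
  then have "(diag_proj n S * A) $$ (i, j) = (A * diag_proj n S) $$ (i, j)" if "i < n" "j < n" for i j
    using that unfolding index_diag_proj_mult[OF A that] index_mult_diag_proj[OF A that] by auto
  then show "diag_proj n S * A = A * diag_proj n S"
    using A by (intro eq_matI) auto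
qed

lemma commute_inverse:
  fixes A B E :: "'a::semiring_1 mat"
  assumes A: "A \<in> carrier_mat n n" and B: "B \<in> carrier_mat n n" and E: "E \<in> carrier_mat n n"
    and AB: "A * B = 1\<^sub>m n" and BA: "B * A = 1\<^sub>m n" and EA: "E * A = A * E"
  shows "E * B = B * E"
proof -
  have "B * E = B * E * (A * B)" using B E by (simp add: AB)
  also have "\<dots> = B * (E * A) * B"
    using assoc_mult_mat[OF mult_carrier_mat[OF B E] A B] assoc_mult_mat[OF B E A] by simp
  also have "\<dots> = (B * A) * E * B"
    using assoc_mult_mat[OF B A E] by (simp add: EA)
  also have "\<dots> = E * B" using B E by (simp add: BA)
  finally show ?thesis by simp
qed

definition same_block :: "nat \<Rightarrow> (nat \<Rightarrow> nat set) \<Rightarrow> nat \<Rightarrow> nat \<Rightarrow> bool" where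
  "same_block b J a c \<longleftrightarrow> (\<exists>k\<le>b. a \<in> J k \<and> c \<in> J k)"

definition block_diagonal :: "nat \<Rightarrow> nat \<Rightarrow> (nat \<Rightarrow> nat set) \<Rightarrow> 'a::zero mat \<Rightarrow> bool" where
  "block_diagonal m b J A \<longleftrightarrow> (\<forall>a<m. \<forall>c<m. A $$ (a, c) \<noteq> 0 \<longrightarrow> same_block b J a c)"

definition support_within :: "nat \<Rightarrow> (nat \<times> nat) set \<Rightarrow> 'a::zero mat \<Rightarrow> bool" where
  "support_within m S A \<longleftrightarrow> (\<forall>i<m. \<forall>j<m. A $$ (i, j) \<noteq> 0 \<longrightarrow> (i, j) \<in> S)"

lemma is_partition_block_eq:
  "is_partition m b J \<Longrightarrow> k \<le> b \<Longrightarrow> l \<le> b \<Longrightarrow> a \<in> J k \<Longrightarrow> a \<in> J l \<Longrightarrow> k = l"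
  unfolding is_partition_def by blast

lemma is_partition_obtain_block:
  assumes "is_partition m b J" "a < m"
  obtains k where "k \<le> b" "a \<in> J k"
  using assms unfolding is_partition_def by blast

lemma is_partition_block_subset: "is_partition m b J \<Longrightarrow> k \<le> b \<Longrightarrow> J k \<subseteq> {..<m}"
  unfolding is_partition_def by blast

lemma same_block_refl: "is_partition m b J \<Longrightarrow> a < m \<Longrightarrow> same_block b J a a"
  unfolding same_block_def by (meson is_partition_obtain_block)

lemma same_block_sym: "same_block b J a c \<Longrightarrow> same_block b J c a"
  unfolding same_block_def by blast

lemma same_block_mem:
  "is_partition m b J \<Longrightarrow> same_block b J a c \<Longrightarrow> k \<le> b \<Longrightarrow> a \<in> J k \<Longrightarrow> c \<in> J k"
  unfolding same_block_def using is_partition_block_eq by blast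

lemma block_diagonal_zero:
  assumes "is_partition m b J" "block_diagonal m b J A" "k \<le> b" "i \<in> J k" "a < m" "a \<notin> J k"
  shows "A $$ (i, a) = 0"
  using assms is_partition_block_subset[OF assms(1,3)] same_block_mem[OF assms(1) _ assms(3,4)]
  unfolding block_diagonal_def by blast

lemma block_diagonal_inverse:
  fixes A B :: "'a::semiring_1 mat"
  assumes part: "is_partition m b J" and A: "A \<in> carrier_mat m m" and B: "B \<in> carrier_mat m m"
    and AB: "A * B = 1\<^sub>m m" and BA: "B * A = 1\<^sub>m m" and "block_diagonal m b J A"
  shows "block_diagonal m b J B"
  unfolding block_diagonal_def
proof (intro allI impI)
  fix a c assume a: "a < m" and c: "c < m" and nz: "B $$ (a, c) \<noteq> 0"
  obtain k where k: "k \<le> b" "a \<in> J k" using is_partition_obtain_block[OF part a] .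
  have "A $$ (i, j) \<noteq> 0 \<Longrightarrow> i \<in> J k \<longleftrightarrow> j \<in> J k" if "i < m" "j < m" for i j
    using \<open>block_diagonal m b J A\<close> that same_block_mem[OF part _ k(1)] same_block_sym
    unfolding block_diagonal_def by metis
  then have "diag_proj m (J k) * A = A * diag_proj m (J k)"
    using diag_proj_commute_iff[OF A] by blast
  then have "diag_proj m (J k) * B = B * diag_proj m (J k)"
    using commute_inverse[OF A B diag_proj_carrier AB BA] by blast
  then have "c \<in> J k" using diag_proj_commute_iff[OF B] a c nz k(2) by blast
  with k show "same_block b J a c" unfolding same_block_def by blast
qed

lemma block_support_row:
  assumes part: "is_partition m b J" and "(i, a) \<in> block_support b J" "k \<in> {1..b}" "i \<in> J (k - 1)"
  shows "a \<in> J k"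
proof -
  obtain l where l: "l \<in> {1..b}" "i \<in> J (l - 1)" "a \<in> J l"
    using assms(2) unfolding block_support_def by blast
  have "k - 1 = l - 1" using is_partition_block_eq[OF part _ _ assms(4) l(2)] assms(3) l(1) by auto
  then have "k = l" using assms(3) l(1) by auto
  with l show ?thesis by simp
qed

lemma block_support_same_row:
  assumes part: "is_partition m b J" and "(i, j) \<in> block_support b J" "(i, a) \<in> block_support b J"
  shows "same_block b J a j"
proof -
  obtain k where k: "k \<in> {1..b}" "i \<in> J (k - 1)" "j \<in> J k"
    using assms(2) unfolding block_support_def by blast
  then show ?thesis using block_support_row[OF part assms(3) k(1,2)] unfolding same_block_def by auto
qed

lemma block_support_same_block:
  assumes part: "is_partition m b J" and "(x, y) \<in> block_support b J"
    and "same_block b J x i" "same_block b J y j"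
  shows "(i, j) \<in> block_support b J"
proof -
  obtain k where k: "k \<in> {1..b}" "x \<in> J (k - 1)" "y \<in> J k"
    using assms(2) unfolding block_support_def by blast
  then have "i \<in> J (k - 1)" "j \<in> J k" using same_block_mem[OF part] assms(3,4) by auto
  with k(1) show ?thesis unfolding block_support_def by blast
qed

lemma support_within_conj:
  fixes A B D :: "'a::semiring_0 mat"
  assumes part: "is_partition m b J"
    and A: "A \<in> carrier_mat m m" and D: "D \<in> carrier_mat m m" and B: "B \<in> carrier_mat m m"
    and "block_diagonal m b J A" "block_diagonal m b J B" "support_within m (block_support b J) D"
  shows "support_within m (block_support b J) (A * D * B)"
  unfolding support_within_def
proof (intro allI impI)
  fix i j assume ij: "i < m" "j < m" and "(A * D * B) $$ (i, j) \<noteq> 0"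
  then obtain y where y: "y < m" "(A * D) $$ (i, y) \<noteq> 0" "B $$ (y, j) \<noteq> 0"
    using index_mult_mat_nonzero[OF mult_carrier_mat[OF A D] B] by metis
  then obtain x where x: "x < m" "A $$ (i, x) \<noteq> 0" "D $$ (x, y) \<noteq> 0"
    using index_mult_mat_nonzero[OF A D ij(1)] by metis
  have "(x, y) \<in> block_support b J" using assms(7) x y unfolding support_within_def by blast
  moreover have "same_block b J x i" "same_block b J y j"
    using assms(5,6) ij x y same_block_sym unfolding block_diagonal_def by blast+
  ultimately show "(i, j) \<in> block_support b J" using block_support_same_block[OF part] by blast
qed

lemma inv_mat_submatrix_block:
  fixes T :: "'a::field mat"
  assumes part: "is_partition m b J" and T: "T \<in> carrier_mat m m" and det: "det T \<noteq> 0"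
    and block: "block_diagonal m b J T" and k: "k \<le> b"
  shows "inv_mat (submatrix T (J k) (J k)) = submatrix (inv_mat T) (J k) (J k)"
proof -
  note inv = inv_mat_nonzero_det[OF T det]
  have I: "J k \<subseteq> {..<m}" using is_partition_block_subset[OF part k] .
  have block': "block_diagonal m b J (inv_mat T)"
    using block_diagonal_inverse[OF part T inv block] .
  have "submatrix T (J k) (J k) * submatrix (inv_mat T) (J k) (J k) = submatrix (1\<^sub>m m) (J k) (J k)"
    using submatrix_mult[OF T inv(1) I I I] block_diagonal_zero[OF part block k] by (simp add: inv(2))
  moreover have "submatrix (inv_mat T) (J k) (J k) * submatrix T (J k) (J k) = submatrix (1\<^sub>m m) (J k) (J k)"
    using submatrix_mult[OF inv(1) T I I I] block_diagonal_zero[OF part block' k] by (simp add: inv(3))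
  ultimately show ?thesis
    using inv_mat_eqI[OF carrier_submatrix[OF T I I] carrier_submatrix[OF inv(1) I I]]
    by (simp add: submatrix_one_mat[OF I])
qed

lemma submatrix_conj_block_diagonal:
  fixes T D :: "'a::field mat"
  assumes part: "is_partition m b J" and T: "T \<in> carrier_mat m m" and D: "D \<in> carrier_mat m m"
    and det: "det T \<noteq> 0" and block: "block_diagonal m b J T"
    and supp: "support_within m (block_support b J) D" and k: "k \<in> {1..b}"
  shows "submatrix (inv_mat T * D * T) (J (k - 1)) (J k) =
    inv_mat (submatrix T (J (k - 1)) (J (k - 1))) * submatrix D (J (k - 1)) (J k) * submatrix T (J k) (J k)"
proof -
  note inv = inv_mat_nonzero_det[OF T det]
  have kb: "k - 1 \<le> b" "k \<le> b" using k by auto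
  have I: "J (k - 1) \<subseteq> {..<m}" and K: "J k \<subseteq> {..<m}"
    using is_partition_block_subset[OF part kb(1)] is_partition_block_subset[OF part kb(2)] .
  have zero_D: "D $$ (i, a) = 0" if "i \<in> J (k - 1)" "a < m" "a \<notin> J k" for i a
    using supp that I block_support_row[OF part _ k] unfolding support_within_def by blast
  have "submatrix (inv_mat T * D * T) (J (k - 1)) (J k)
      = submatrix (inv_mat T * (D * T)) (J (k - 1)) (J k)"
    using assoc_mult_mat[OF inv(1) D T] by simp
  also have "\<dots> = submatrix (inv_mat T) (J (k - 1)) (J (k - 1)) * submatrix (D * T) (J (k - 1)) (J k)"
    using submatrix_mult[OF inv(1) mult_carrier_mat[OF D T] I I K]
      block_diagonal_zero[OF part block_diagonal_inverse[OF part T inv block] kb(1)] by simp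
  also have "\<dots> = submatrix (inv_mat T) (J (k - 1)) (J (k - 1)) *
      (submatrix D (J (k - 1)) (J k) * submatrix T (J k) (J k))"
    using submatrix_mult[OF D T I K K zero_D] by simp
  also have "\<dots> = submatrix (inv_mat T) (J (k - 1)) (J (k - 1)) *
      submatrix D (J (k - 1)) (J k) * submatrix T (J k) (J k)"
    using assoc_mult_mat[OF carrier_submatrix[OF inv(1) I I] carrier_submatrix[OF D I K]
        carrier_submatrix[OF T K K]] by simp
  also have "\<dots> = inv_mat (submatrix T (J (k - 1)) (J (k - 1))) *
      submatrix D (J (k - 1)) (J k) * submatrix T (J k) (J k)"
    using inv_mat_submatrix_block[OF part T det block kb(1)] by simp
  finally show ?thesis .
qed

section \<open>The incremental sweeping algorithm\<close>

lemma isa_T_carrier [simp]: "isa_T m s D P \<in> carrier_mat m m"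
  and dim_isa_T [simp]: "dim_row (isa_T m s D P) = m" "dim_col (isa_T m s D P) = m"
  unfolding isa_T_def by simp_all

lemma index_isa_T:
  assumes "a < m" "c < m"
  shows "isa_T m s D P $$ (a, c) = (if a = c then 1 else 0) -
    (\<Sum>(i, j)\<in>isa_cob m s D P.
        if a = prim_col P i \<and> c = j then D $$ (i, j) / D $$ (i, prim_col P i) else 0)"
proof -
  have "D $$ (i, j) / D $$ (i, prim_col P i) * unit_mat m (prim_col P i) j $$ (a, c) =
      (if a = prim_col P i \<and> c = j then D $$ (i, j) / D $$ (i, prim_col P i) else 0)" for i j
    using assms by (simp add: unit_mat_def)
  with assms show ?thesis by (simp add: isa_T_def)
qed

lemma isa_T_unit_col:
  assumes "j \<notin> snd ` isa_cob m s D P" "a < m" "j < m"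
  shows "isa_T m s D P $$ (a, j) = (if a = j then 1 else 0)"
proof -
  have "(\<Sum>(i, j')\<in>isa_cob m s D P.
      if a = prim_col P i \<and> j = j' then D $$ (i, j') / D $$ (i, prim_col P i) else 0) = 0"
  proof (rule sum.neutral, clarify)
    fix i j' assume "(i, j') \<in> isa_cob m s D P"
    then have "j \<noteq> j'" using assms(1) by force
    then show "(if a = prim_col P i \<and> j = j' then D $$ (i, j') / D $$ (i, prim_col P i) else 0) = 0"
      by simp
  qed
  then show ?thesis by (simp add: index_isa_T[OF assms(2,3)])
qed

lemma isa_T_unit_row:
  assumes "p \<notin> (\<lambda>(i, j). prim_col P i) ` isa_cob m s D P" "p < m" "c < m"
  shows "isa_T m s D P $$ (p, c) = (if p = c then 1 else 0)"
proof -
  have "(\<Sum>(i, j)\<in>isa_cob m s D P.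
      if p = prim_col P i \<and> c = j then D $$ (i, j) / D $$ (i, prim_col P i) else 0) = 0"
  proof (rule sum.neutral, clarify)
    fix i j assume "(i, j) \<in> isa_cob m s D P"
    then have "p \<noteq> prim_col P i" using assms(1) by force
    then show "(if p = prim_col P i \<and> c = j then D $$ (i, j) / D $$ (i, prim_col P i) else 0) = 0"
      by simp
  qed
  then show ?thesis by (simp add: index_isa_T[OF assms(2,3)])
qed

lemma isa_T_nonzero_off_diag:
  assumes "a < m" "c < m" "a \<noteq> c" "isa_T m s D P $$ (a, c) \<noteq> 0"
  obtains i where "(i, c) \<in> isa_cob m s D P" "a = prim_col P i"
proof -
  have "(\<Sum>(i, j)\<in>isa_cob m s D P.
      if a = prim_col P i \<and> c = j then D $$ (i, j) / D $$ (i, prim_col P i) else 0) \<noteq> 0"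
    using assms(3,4) by (simp add: index_isa_T[OF assms(1,2)])
  then obtain x where "x \<in> isa_cob m s D P" "(case x of (i, j) \<Rightarrow>
      if a = prim_col P i \<and> c = j then D $$ (i, j) / D $$ (i, prim_col P i) else 0) \<noteq> 0"
    by (rule sum.not_neutral_contains_not_neutral)
  then show thesis using that by (cases x) (auto split: if_splits)
qed

lemma isa_cob_mem:
  assumes "(i, j) \<in> isa_cob m s D P"
  shows "j < m" "i + s = j" "D $$ (i, j) \<noteq> 0" "(i, prim_col P i) \<in> P"
proof -
  from assms obtain j' where "(i, j) = (j' - s, j')" "s \<le> j'" "j' < m" "D $$ (j' - s, j') \<noteq> 0"
    and ex: "\<exists>p. (i, p) \<in> P"
    unfolding isa_cob_def isa_cand_def by auto
  then show "j < m" "i + s = j" "D $$ (i, j) \<noteq> 0" by auto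
  show "(i, prim_col P i) \<in> P" unfolding prim_col_def using someI_ex[OF ex] .
qed

definition isa_invariant ::
    "nat \<Rightarrow> nat \<Rightarrow> (nat \<Rightarrow> nat set) \<Rightarrow> nat \<Rightarrow> 'a::field mat \<Rightarrow> (nat \<times> nat) set \<Rightarrow> bool" where
  "isa_invariant m b J s D P \<longleftrightarrow> D \<in> carrier_mat m m \<and> support_within m (block_support b J) D \<and>
     (\<forall>(i, p)\<in>P. i < p \<and> p < i + s \<and> (i, p) \<in> block_support b J)"

lemma isa_cob_primary_pivot:
  assumes part: "is_partition m b J" and inv: "isa_invariant m b J s D P"
    and cob: "(i, j) \<in> isa_cob m s D P"
  shows "prim_col P i < j" "same_block b J (prim_col P i) j"
proof -
  note j = isa_cob_mem[OF cob]
  have "(i, j) \<in> block_support b J"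
    using inv j unfolding isa_invariant_def support_within_def by auto
  moreover have "prim_col P i < i + s" "(i, prim_col P i) \<in> block_support b J"
    using inv j(4) unfolding isa_invariant_def by auto
  ultimately show "prim_col P i < j" "same_block b J (prim_col P i) j"
    using j(2) block_support_same_row[OF part] by auto
qed

lemma isa_T_diag:
  assumes part: "is_partition m b J" and inv: "isa_invariant m b J s D P" and a: "a < m"
  shows "isa_T m s D P $$ (a, a) = 1"
proof -
  have "(\<Sum>(i, j)\<in>isa_cob m s D P.
      if a = prim_col P i \<and> a = j then D $$ (i, j) / D $$ (i, prim_col P i) else 0) = 0"
  proof (rule sum.neutral, clarify)
    fix i j assume "(i, j) \<in> isa_cob m s D P"
    then have "prim_col P i < j" using isa_cob_primary_pivot(1)[OF part inv] by blast
    then show "(if a = prim_col P i \<and> a = j then D $$ (i, j) / D $$ (i, prim_col P i) else 0) = 0"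
      by auto
  qed
  then show ?thesis by (simp add: index_isa_T[OF a a])
qed

lemma isa_T_upper_triangular:
  assumes part: "is_partition m b J" and inv: "isa_invariant m b J s D P"
  shows "upper_triangular (isa_T m s D P)"
  unfolding upper_triangular_def
proof (intro allI impI)
  fix a c assume "a < dim_row (isa_T m s D P)" "c < a"
  then have a: "a < m" and c: "c < m" "c < a" by auto
  show "isa_T m s D P $$ (a, c) = 0"
  proof (rule ccontr)
    assume "isa_T m s D P $$ (a, c) \<noteq> 0"
    then obtain i where "(i, c) \<in> isa_cob m s D P" "a = prim_col P i"
      using isa_T_nonzero_off_diag[OF a c(1)] c(2) by blast
    then show False using isa_cob_primary_pivot(1)[OF part inv] c(2) by fastforce
  qed
qed

lemma det_isa_T:
  assumes part: "is_partition m b J" and inv: "isa_invariant m b J s D P"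
  shows "det (isa_T m s D P) = 1"
proof -
  have "diag_mat (isa_T m s D P) = replicate m 1"
    using isa_T_diag[OF part inv] unfolding diag_mat_def by (simp add: list_eq_iff_nth_eq)
  then show ?thesis
    using det_upper_triangular[OF isa_T_upper_triangular[OF part inv] isa_T_carrier] by simp
qed

lemma isa_T_block_diagonal:
  assumes part: "is_partition m b J" and inv: "isa_invariant m b J s D P"
  shows "block_diagonal m b J (isa_T m s D P)"
  unfolding block_diagonal_def
proof (intro allI impI)
  fix a c assume a: "a < m" and c: "c < m" and nz: "isa_T m s D P $$ (a, c) \<noteq> 0"
  show "same_block b J a c"
  proof (cases "a = c")
    case True
    then show ?thesis using same_block_refl[OF part a] by simp
  next
    case False
    then obtain i where "(i, c) \<in> isa_cob m s D P" "a = prim_col P i"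
      using isa_T_nonzero_off_diag[OF a c _ nz] by blast
    then show ?thesis using isa_cob_primary_pivot(2)[OF part inv] by blast
  qed
qed

lemma isa_invariant_step:
  assumes part: "is_partition m b J" and inv: "isa_invariant m b J s D P" and s: "1 \<le> s"
  shows "isa_invariant m b J (Suc s)
    (inv_mat (isa_T m s D P) * D * isa_T m s D P) (P \<union> isa_newprim m s D P)"
proof -
  let ?T = "isa_T m s D P"
  have D: "D \<in> carrier_mat m m" and supp: "support_within m (block_support b J) D"
    using inv unfolding isa_invariant_def by auto
  have det: "det ?T \<noteq> 0" using det_isa_T[OF part inv] by simp
  note inv_T = inv_mat_nonzero_det[OF isa_T_carrier det]
  have block: "block_diagonal m b J ?T" using isa_T_block_diagonal[OF part inv] .
  have "support_within m (block_support b J) (inv_mat ?T * D * ?T)"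
    using support_within_conj[OF part inv_T(1) D isa_T_carrier
        block_diagonal_inverse[OF part isa_T_carrier inv_T block] block supp] .
  moreover have "i < p \<and> p < i + Suc s \<and> (i, p) \<in> block_support b J"
    if ip: "(i, p) \<in> P \<union> isa_newprim m s D P" for i p
  proof (cases "(i, p) \<in> P")
    case True
    then show ?thesis using inv unfolding isa_invariant_def by auto
  next
    case False
    then obtain j where "(i, p) = (j - s, j)" "s \<le> j" "j < m" "D $$ (j - s, j) \<noteq> 0"
      using ip unfolding isa_newprim_def isa_cand_def by auto
    moreover have "j - s < m" using \<open>j < m\<close> by linarith
    ultimately show ?thesis using supp s unfolding support_within_def by auto
  qed
  ultimately show ?thesis using inv_T(1) D unfolding isa_invariant_def by auto
qed

lemma isa_Delta_Suc:
  "1 \<le> s \<Longrightarrow> isa_Delta m \<Delta> (Suc s) = inv_mat (isa_Tmat m \<Delta> s) * isa_Delta m \<Delta> s * isa_Tmat m \<Delta> s"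
  by (simp add: isa_Delta_def isa_Tmat_def isa_prim_before_def isa_step_def Let_def)

lemma isa_prim_before_Suc:
  "1 \<le> s \<Longrightarrow> isa_prim_before m \<Delta> (Suc s) =
    isa_prim_before m \<Delta> s \<union> isa_newprim m s (isa_Delta m \<Delta> s) (isa_prim_before m \<Delta> s)"
  by (simp add: isa_Delta_def isa_prim_before_def isa_step_def Let_def)

lemma isa_invariant_state:
  assumes cm: "connection_matrix m b J \<Delta>" and s: "1 \<le> s"
  shows "isa_invariant m b J s (isa_Delta m \<Delta> s) (isa_prim_before m \<Delta> s)"
  using s
proof (induction s rule: dec_induct)
  case base
  then show ?case using cm
    by (simp add: isa_invariant_def support_within_def connection_matrix_def
        isa_Delta_def isa_prim_before_def)
next
  case (step s)
  have "is_partition m b J" using cm unfolding connection_matrix_def by blast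
  from isa_invariant_step[OF this step.IH step.hyps(1)] step.hyps(1) show ?case
    by (simp add: isa_Delta_Suc isa_prim_before_Suc isa_Tmat_def)
qed

theorem mainTheorem5:
  fixes \<Delta> :: "'a::field mat" and m b :: nat and J :: "nat \<Rightarrow> nat set" and r :: nat
  assumes "m \<ge> 1"
    and "connection_matrix m b J \<Delta>"
    and "2 \<le> r" "r \<le> m"
  shows "(\<forall>k\<in>{1..b}.
            submatrix (isa_Delta m \<Delta> r) (J (k - 1)) (J k) =
              inv_mat (submatrix (isa_Tmat m \<Delta> (r - 1)) (J (k - 1)) (J (k - 1))) *
              submatrix (isa_Delta m \<Delta> (r - 1)) (J (k - 1)) (J k) *
              submatrix (isa_Tmat m \<Delta> (r - 1)) (J k) (J k))
       \<and> (\<forall>i<m. \<forall>j<m. (i, j) \<notin> block_support b J \<longrightarrow> isa_Delta m \<Delta> r $$ (i, j) = 0)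
       \<and> (let T = isa_Tmat m \<Delta> (r - 1);
              C = snd ` isa_cob_pivots m \<Delta> (r - 1);
              R = (\<lambda>(i, j). isa_used_prim_col m \<Delta> (r - 1) i) ` isa_cob_pivots m \<Delta> (r - 1)
          in isa_Delta m \<Delta> r = inv_mat T * isa_Delta m \<Delta> (r - 1) * T
             \<and> (\<forall>j<m. j \<notin> C \<longrightarrow> (\<forall>a<m. T $$ (a, j) = (if a = j then 1 else 0)))
             \<and> (\<forall>p<m. p \<notin> R \<longrightarrow> (\<forall>c<m. inv_mat T $$ (p, c) = (if p = c then 1 else 0)))
             \<and> (\<forall>i<m. \<forall>j<m. isa_Delta m \<Delta> r $$ (i, j) \<noteq> isa_Delta m \<Delta> (r - 1) $$ (i, j)
                   \<longrightarrow> i \<in> R \<or> j \<in> C))"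
proof -
  define s where "s = r - 1"
  have s: "1 \<le> s" "r = Suc s" using assms(3) unfolding s_def by auto
  have part: "is_partition m b J" using assms(2) unfolding connection_matrix_def by blast
  let ?D = "isa_Delta m \<Delta> s" and ?P = "isa_prim_before m \<Delta> s"
  let ?T = "isa_T m s ?D ?P" and ?cob = "isa_cob m s ?D ?P"
  have inv: "isa_invariant m b J s ?D ?P" using isa_invariant_state[OF assms(2) s(1)] .
  have D: "?D \<in> carrier_mat m m" and supp: "support_within m (block_support b J) ?D"
    using inv unfolding isa_invariant_def by auto
  have det: "det ?T \<noteq> 0" using det_isa_T[OF part inv] by simp
  have Delta_r: "isa_Delta m \<Delta> r = inv_mat ?T * ?D * ?T"
    using isa_Delta_Suc[OF s(1)] s(2) by (simp add: isa_Tmat_def)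
  let ?C = "snd ` ?cob" and ?R = "(\<lambda>(i, j). prim_col ?P i) ` ?cob"
  have blocks: "\<forall>k\<in>{1..b}. submatrix (inv_mat ?T * ?D * ?T) (J (k - 1)) (J k) =
      inv_mat (submatrix ?T (J (k - 1)) (J (k - 1))) * submatrix ?D (J (k - 1)) (J k) *
      submatrix ?T (J k) (J k)"
    using submatrix_conj_block_diagonal[OF part isa_T_carrier D det isa_T_block_diagonal[OF part inv] supp]
    by blast
  have outside: "\<forall>i<m. \<forall>j<m. (i, j) \<notin> block_support b J \<longrightarrow> isa_Delta m \<Delta> r $$ (i, j) = 0"
    using isa_invariant_state[OF assms(2), of r] s unfolding isa_invariant_def support_within_def by auto
  have cols: "\<forall>j<m. j \<notin> ?C \<longrightarrow> (\<forall>a<m. ?T $$ (a, j) = (if a = j then 1 else 0))"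
    using isa_T_unit_col by blast
  have rows: "\<forall>p<m. p \<notin> ?R \<longrightarrow> (\<forall>c<m. inv_mat ?T $$ (p, c) = (if p = c then 1 else 0))"
    using inv_mat_unit_row[OF isa_T_carrier det] isa_T_unit_row by blast
  have changed: "\<forall>i<m. \<forall>j<m. (inv_mat ?T * ?D * ?T) $$ (i, j) \<noteq> ?D $$ (i, j) \<longrightarrow> i \<in> ?R \<or> j \<in> ?C"
    using index_conj_unchanged[OF isa_T_carrier D det] isa_T_unit_row isa_T_unit_col by blast
  show ?thesis
    unfolding s_def[symmetric] Let_def isa_Tmat_def isa_cob_pivots_def isa_used_prim_col_def
    using blocks outside cols rows changed unfolding Delta_r by blast
qed

end
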